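(* With the conventions $A_0=1$, $B_0=0$, the tiling numbers satisfy, for all $n\ge2$, $$A_{2n}=6A_{2n-2}-A_{2n-4}-2,\qquad A_{2n+1}=6A_{2n-1}-A_{2n-3}+2\ (n\ge2),$$ $$B_{2n}=6B_{2n-2}-B_{2n-4}+2,\qquad B_{2n+1}=6B_{2n-1}-B_{2n-3}-2\ (n\ge2).$$
   Context: Let $s=\sqrt3/2$. Consider the standard triangular lattice in the plane whose vertices are the points $(a+b/2,\,bs)$ with $a,b\in\mathbb Z$ and whose edges are the unit segments joining lattice points in the directions $0^\circ,60^\circ,120^\circ$; it divides the plane into unit equilateral triangles called cells. A small tile is a single cell; a large tile is an equilateral triangle of side $2$ whose vertices are lattice points (so it is a union of $4$ cells; it may point up or down). For a region $R$ that is a finite union of cells, a tiling of $R$ is a finite set of small and large tiles, each contained in $R$, with pairwise disjoint interiors and union equal to $R$. For $n\ge1$, $A_n$ is the parallelogram with vertices $(0,0),(n,0),(n+1,2s),(1,2s)$ and $B_n$ is the trapezoid with vertices $(0,0),(n+1,0),(n,2s),(1,2s)$ (for $n=1$ it is a triangle of side $2$); each consists of $4n$ cells. By abuse of notation, $A_n$ and $B_n$ also denote the number of tilings of these regions. *)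

theory Defs
  imports Main
begin

text \<open>Lattice coordinates: the lattice point (a,b) is (a + b/2, b*sqrt 3/2).
  Up cell (a,b): triangle with vertices (a,b),(a+1,b),(a,b+1).
  Down cell (a,b): triangle with vertices (a+1,b),(a,b+1),(a+1,b+1).\<close>

datatype cell = Up int int | Down int int

definition large_up :: "int \<Rightarrow> int \<Rightarrow> cell set" where
  "large_up a b = {Up a b, Up (a+1) b, Up a (b+1), Down a b}"

definition large_down :: "int \<Rightarrow> int \<Rightarrow> cell set" where
  "large_down a b = {Down (a+1) b, Down a (b+1), Down (a+1) (b+1), Up (a+1) (b+1)}"

definition tiles :: "cell set set" where
  "tiles = {{c} | c. True} \<union> {large_up a b | a b. True} \<union> {large_down a b | a b. True}"

definition is_tiling :: "cell set \<Rightarrow> cell set set \<Rightarrow> bool" where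
  "is_tiling R T \<longleftrightarrow> finite T \<and> T \<subseteq> tiles \<and> (\<forall>t\<in>T. t \<subseteq> R)
     \<and> (\<forall>t\<in>T. \<forall>t'\<in>T. t \<noteq> t' \<longrightarrow> t \<inter> t' = {}) \<and> \<Union>T = R"

definition num_tilings :: "cell set \<Rightarrow> nat" where
  "num_tilings R = card {T. is_tiling R T}"

text \<open>Parallelogram A_n: lattice vertices (0,0),(n,0),(n,2),(0,2).\<close>
definition regionA :: "nat \<Rightarrow> cell set" where
  "regionA n = {Up a b | a b. 0 \<le> a \<and> a < int n \<and> 0 \<le> b \<and> b \<le> 1}
             \<union> {Down a b | a b. 0 \<le> a \<and> a < int n \<and> 0 \<le> b \<and> b \<le> 1}"

text \<open>Trapezoid B_n: lattice vertices (0,0),(n+1,0),(n-1,2),(0,2).\<close>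
definition regionB :: "nat \<Rightarrow> cell set" where
  "regionB n = {Up a 0 | a. 0 \<le> a \<and> a \<le> int n} \<union> {Down a 0 | a. 0 \<le> a \<and> a < int n}
             \<union> {Up a 1 | a. 0 \<le> a \<and> a < int n} \<union> {Down a 1 | a. 0 \<le> a \<and> a < int n - 1}"

definition A :: "nat \<Rightarrow> int" where
  "A n = (if n = 0 then 1 else int (num_tilings (regionA n)))"

definition B :: "nat \<Rightarrow> int" where
  "B n = (if n = 0 then 0 else int (num_tilings (regionB n)))"

end

theory Submission
  imports Defs
begin

(* Splitting the tilings according to the tile that covers a rightmost cell expresses the
   tiling numbers of the two-row staircase regions stair r0 r1 through each other and yields
   the coupled recurrences A (m+2) = 2 B (m+1) + B m and B (m+2) = B (m+1) + B m + A (m+1).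
   Eliminating shows that the defects d x m = x (m+2) - 2 x (m+1) - x m alternate in sign,
   d B m = -(-1)^m and d A m = (-1)^m, and since
   x (m+4) - 6 x (m+2) + x m = d x (m+2) + 2 d x (m+1) - d x m,
   the stated recurrences with their constants -2, +2, +2, -2 follow. *)

lemma cell_set_eqI:
  assumes "\<And>a b. Up a b \<in> X \<longleftrightarrow> Up a b \<in> Y" "\<And>a b. Down a b \<in> X \<longleftrightarrow> Down a b \<in> Y"
  shows "X = Y"
  using assms by (metis cell.exhaust set_eqI)

lemma tiles_nonempty: "t \<in> tiles \<Longrightarrow> t \<noteq> {}"
  by (auto simp: tiles_def large_up_def large_down_def)

lemma finite_tilings: "finite R \<Longrightarrow> finite {T. is_tiling R T}"
  by (rule finite_subset[of _ "Pow (Pow R)"]) (auto simp: is_tiling_def)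

lemma is_tilingD:
  assumes "is_tiling R T"
  shows "\<And>t. t \<in> T \<Longrightarrow> t \<in> tiles" and "\<And>t. t \<in> T \<Longrightarrow> t \<subseteq> R"
    and "\<And>c. c \<in> R \<Longrightarrow> \<exists>t\<in>T. c \<in> t"
  using assms unfolding is_tiling_def by auto

lemma is_tiling_insert:
  assumes T: "is_tiling (R - t) T" and t: "t \<in> tiles" "t \<subseteq> R"
  shows "is_tiling R (insert t T)"
proof -
  have "finite T" "T \<subseteq> tiles" and sub: "\<forall>x\<in>T. x \<subseteq> R - t" and cover: "\<Union>T = R - t"
    and disj: "\<forall>x\<in>T. \<forall>y\<in>T. x \<noteq> y \<longrightarrow> x \<inter> y = {}"
    using T unfolding is_tiling_def by auto
  moreover have "\<forall>x\<in>insert t T. \<forall>y\<in>insert t T. x \<noteq> y \<longrightarrow> x \<inter> y = {}"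
    using disj sub by blast
  moreover have "\<Union>(insert t T) = R" using cover t(2) by blast
  ultimately show ?thesis using t unfolding is_tiling_def by auto
qed

lemma is_tiling_Diff:
  assumes "is_tiling R T" "t \<in> T"
  shows "is_tiling (R - t) (T - {t})"
proof -
  have disj: "\<forall>x\<in>T. \<forall>y\<in>T. x \<noteq> y \<longrightarrow> x \<inter> y = {}" and cover: "\<Union>T = R"
    using assms(1) unfolding is_tiling_def by auto
  have "\<forall>x\<in>T - {t}. x \<subseteq> R - t" using disj cover assms(2) by blast
  moreover have "\<Union>(T - {t}) = R - t" using disj cover assms(2) by blast
  ultimately show ?thesis using assms(1) unfolding is_tiling_def by auto
qed

lemma num_tilings_empty: "num_tilings {} = 1"
proof -
  have "{T. is_tiling {} T} = {{}}"
    using tiles_nonempty by (auto simp: is_tiling_def)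
  thus ?thesis unfolding num_tilings_def by simp
qed

lemma num_tilings_split_at:
  assumes fin: "finite R" and c: "c \<in> R"
  shows "num_tilings R = (\<Sum>t\<in>{t\<in>tiles. c \<in> t \<and> t \<subseteq> R}. num_tilings (R - t))"
proof -
  let ?C = "{t\<in>tiles. c \<in> t \<and> t \<subseteq> R}"
  let ?P = "SIGMA t:?C. {T. is_tiling (R - t) T}"
  have image: "(\<lambda>(t, T). insert t T) ` ?P = {T. is_tiling R T}"
  proof (intro equalityI subsetI)
    fix T assume "T \<in> {T. is_tiling R T}"
    hence T: "is_tiling R T" by simp
    then obtain t where t: "t \<in> T" "c \<in> t" using c by (blast dest: is_tilingD(3))
    have "t \<in> ?C" using T t by (blast dest: is_tilingD(1,2))
    moreover have "is_tiling (R - t) (T - {t})" using T t(1) by (rule is_tiling_Diff)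
    moreover have "T = insert t (T - {t})" using t(1) by blast
    ultimately show "T \<in> (\<lambda>(t, T). insert t T) ` ?P"
      by (intro image_eqI[where x = "(t, T - {t})"]) simp_all
  next
    fix T assume "T \<in> (\<lambda>(t, T). insert t T) ` ?P"
    then obtain t T' where "t \<in> ?C" "is_tiling (R - t) T'" "T = insert t T'" by blast
    then show "T \<in> {T. is_tiling R T}" by (simp add: is_tiling_insert)
  qed
  have inj: "inj_on (\<lambda>(t, T). insert t T) ?P"
  proof (rule inj_onI, clarsimp)
    fix t T t' T'
    assume "c \<in> t" "is_tiling (R - t) T" "c \<in> t'" "is_tiling (R - t') T'"
      and eq: "insert t T = insert t' T'"
    \<comment> \<open>no tiling of R - t' contains a tile through c\<close>
    then have "t \<notin> T'" "t' \<notin> T" "t \<notin> T" "t' \<notin> T'" by (blast dest: is_tilingD(2))+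
    with eq show "t = t' \<and> T = T'" by (metis insert_ident insertI1 insertE)
  qed
  have "finite ?C"
    by (rule finite_subset[of _ "Pow R"]) (use fin in auto)
  then have "card ?P = (\<Sum>t\<in>?C. num_tilings (R - t))"
    unfolding num_tilings_def using fin by (simp add: finite_tilings)
  then show ?thesis
    unfolding num_tilings_def image[symmetric] card_image[OF inj] .
qed

definition tiles_containing :: "cell \<Rightarrow> cell set set" where
  "tiles_containing c = (case c of
      Up a b \<Rightarrow> {{Up a b}, large_up a b, large_up (a-1) b, large_up a (b-1), large_down (a-1) (b-1)}
    | Down a b \<Rightarrow> {{Down a b}, large_up a b, large_down (a-1) b, large_down a (b-1), large_down (a-1) (b-1)})"

lemma singleton_in_tiles [simp]: "{c} \<in> tiles"
  and large_up_in_tiles [simp]: "large_up a b \<in> tiles"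
  and large_down_in_tiles [simp]: "large_down a b \<in> tiles"
  unfolding tiles_def by blast+

lemma tiles_containing_eq: "{t\<in>tiles. c \<in> t} = tiles_containing c"
proof (intro equalityI subsetI)
  fix t assume "t \<in> {t\<in>tiles. c \<in> t}"
  then consider "t = {c}"
    | a b where "t = large_up a b" "c \<in> t" | a b where "t = large_down a b" "c \<in> t"
    unfolding tiles_def by blast
  then show "t \<in> tiles_containing c"
  proof cases
    case 1
    then show ?thesis by (cases c) (simp_all add: tiles_containing_def)
  qed (auto simp: tiles_containing_def large_up_def large_down_def)
next
  fix t assume "t \<in> tiles_containing c"
  then have "t \<in> tiles" by (cases c) (auto simp: tiles_containing_def)
  moreover have "c \<in> t" using \<open>t \<in> tiles_containing c\<close>
    by (cases c) (auto simp: tiles_containing_def large_up_def large_down_def)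
  ultimately show "t \<in> {t\<in>tiles. c \<in> t}" by simp
qed

lemma num_tilings_split_at_cell:
  assumes "finite R" "c \<in> R"
  shows "num_tilings R = (\<Sum>t\<in>{t\<in>tiles_containing c. t \<subseteq> R}. num_tilings (R - t))"
proof -
  have "{t\<in>tiles. c \<in> t \<and> t \<subseteq> R} = {t\<in>tiles_containing c. t \<subseteq> R}"
    using tiles_containing_eq[of c] by blast
  thus ?thesis using num_tilings_split_at[OF assms] by simp
qed

lemma num_tilings_forced:
  assumes "finite R" "{t\<in>tiles_containing c. t \<subseteq> R} = {{c}}"
  shows "num_tilings R = num_tilings (R - {c})"
  using num_tilings_split_at_cell[of R c] assms by auto

lemma num_tilings_two_choices:
  assumes "finite R" "{t\<in>tiles_containing c. t \<subseteq> R} = {{c}, t}" "{c} \<noteq> t"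
  shows "num_tilings R = num_tilings (R - {c}) + num_tilings (R - t)"
  using num_tilings_split_at_cell[of R c] assms by auto

lemma singleton_neq_large_up [simp]: "{c} \<noteq> large_up a b"
  by (auto simp: large_up_def)

lemma singleton_neq_large_down [simp]: "{c} \<noteq> large_down a b"
  by (auto simp: large_down_def)

lemma Collect_mem_insert_conj:
  "{t \<in> insert x X. P t} = (if P x then insert x {t \<in> X. P t} else {t \<in> X. P t})"
  by auto

(* stair r0 r1: the cells of the strip 0 <= y <= 2s right of the line through (0,0) and (1,2s)
   whose leftmost vertex has x-coordinate below r0/2 (bottom row) resp. r1/2 (top row);
   that x-coordinate is a + b/2 for Up a b and a + b/2 + 1/2 for Down a b. *)

definition stair :: "int \<Rightarrow> int \<Rightarrow> cell set" where
  "stair r0 r1 = {c. case c of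
       Up a b \<Rightarrow> 0 \<le> a \<and> (b = 0 \<and> 2*a < r0 \<or> b = 1 \<and> 2*a+1 < r1)
     | Down a b \<Rightarrow> 0 \<le> a \<and> (b = 0 \<and> 2*a+1 < r0 \<or> b = 1 \<and> 2*a+2 < r1)}"

lemma Up_in_stair [simp]:
  "Up a b \<in> stair r0 r1 \<longleftrightarrow> 0 \<le> a \<and> (b = 0 \<and> 2*a < r0 \<or> b = 1 \<and> 2*a+1 < r1)"
  and Down_in_stair [simp]:
  "Down a b \<in> stair r0 r1 \<longleftrightarrow> 0 \<le> a \<and> (b = 0 \<and> 2*a+1 < r0 \<or> b = 1 \<and> 2*a+2 < r1)"
  by (simp_all add: stair_def)

lemma finite_stair [simp]: "finite (stair r0 r1)"
proof -
  let ?I = "{0..\<bar>r0\<bar>+\<bar>r1\<bar>} \<times> {0..1::int}"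
  have "stair r0 r1 \<subseteq> case_prod Up ` ?I \<union> case_prod Down ` ?I"
  proof
    fix c assume "c \<in> stair r0 r1"
    then show "c \<in> case_prod Up ` ?I \<union> case_prod Down ` ?I"
      by (cases c) force+
  qed
  thus ?thesis by (rule finite_subset) auto
qed

definition stair_tilings :: "int \<Rightarrow> int \<Rightarrow> nat" where
  "stair_tilings r0 r1 = num_tilings (stair r0 r1)"

lemma stair_tilings_forced:
  assumes "{t\<in>tiles_containing c. t \<subseteq> stair r0 r1} = {{c}}"
    and "stair r0 r1 - {c} = stair r0' r1'"
  shows "stair_tilings r0 r1 = stair_tilings r0' r1'"
  using num_tilings_forced[OF finite_stair assms(1)] assms(2) by (simp add: stair_tilings_def)

lemma stair_tilings_two_choices:
  assumes "{t\<in>tiles_containing c. t \<subseteq> stair r0 r1} = {{c}, t}" and "{c} \<noteq> t"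
    and "stair r0 r1 - {c} = stair r0' r1'" and "stair r0 r1 - t = stair r0'' r1''"
  shows "stair_tilings r0 r1 = stair_tilings r0' r1' + stair_tilings r0'' r1''"
  using num_tilings_two_choices[OF finite_stair assms(1,2)] assms(3,4) by (simp add: stair_tilings_def)

lemma stair_tilings_even_odd:
  assumes "k \<ge> 2"
  shows "stair_tilings (2*k) (2*k+1) = stair_tilings (2*k) (2*k) + stair_tilings (2*k-1) (2*k-2)"
proof (rule stair_tilings_two_choices)
  show "{t\<in>tiles_containing (Down (k-1) 1). t \<subseteq> stair (2*k) (2*k+1)}
    = {{Down (k-1) 1}, large_down (k-2) 0}"
    unfolding tiles_containing_def cell.case Collect_mem_insert_conj
    using assms by (simp add: large_up_def large_down_def insert_commute)
qed ((rule cell_set_eqI; use assms in \<open>auto simp: large_down_def; presburger\<close>) | simp)+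

lemma stair_tilings_2_3: "stair_tilings 2 3 = stair_tilings 2 2"
proof (rule stair_tilings_forced)
  show "{t\<in>tiles_containing (Down 0 1). t \<subseteq> stair 2 3} = {{Down 0 1}}"
    unfolding tiles_containing_def cell.case Collect_mem_insert_conj
    by (simp add: large_up_def large_down_def)
qed ((rule cell_set_eqI; auto simp: large_up_def large_down_def; presburger) | simp)+

lemma stair_tilings_odd_even:
  assumes "k \<ge> 1"
  shows "stair_tilings (2*k+1) (2*k) = stair_tilings (2*k) (2*k) + stair_tilings (2*k-2) (2*k-1)"
proof (rule stair_tilings_two_choices)
  show "{t\<in>tiles_containing (Up k 0). t \<subseteq> stair (2*k+1) (2*k)} = {{Up k 0}, large_up (k-1) 0}"
    unfolding tiles_containing_def cell.case Collect_mem_insert_conj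
    using assms by (simp add: large_up_def large_down_def insert_commute)
qed ((rule cell_set_eqI; use assms in \<open>auto simp: large_up_def large_down_def; presburger\<close>) | simp)+

lemma stair_tilings_diag:
  assumes "k \<ge> 1"
  shows "stair_tilings (2*k) (2*k) = stair_tilings (2*k-1) (2*k-1)"
proof -
  have "stair_tilings (2*k) (2*k) = stair_tilings (2*k) (2*k-1)"
  proof (rule stair_tilings_forced)
    show "{t\<in>tiles_containing (Up (k-1) 1). t \<subseteq> stair (2*k) (2*k)} = {{Up (k-1) 1}}"
      unfolding tiles_containing_def cell.case Collect_mem_insert_conj
      using assms by (simp add: large_up_def large_down_def)
  qed ((rule cell_set_eqI; use assms in \<open>auto simp: large_up_def large_down_def; presburger\<close>) | simp)+
  also have "\<dots> = stair_tilings (2*k-1) (2*k-1)"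
  proof (rule stair_tilings_forced)
    show "{t\<in>tiles_containing (Down (k-1) 0). t \<subseteq> stair (2*k) (2*k-1)} = {{Down (k-1) 0}}"
      unfolding tiles_containing_def cell.case Collect_mem_insert_conj
      using assms by (simp add: large_up_def large_down_def)
  qed ((rule cell_set_eqI; use assms in \<open>auto simp: large_up_def large_down_def; presburger\<close>) | simp)+
  finally show ?thesis .
qed

lemma stair_tilings_odd_odd:
  assumes "k \<ge> 2"
  shows "stair_tilings (2*k+1) (2*k+1) = stair_tilings (2*k+1) (2*k) + stair_tilings (2*k-1) (2*k-2)"
proof -
  let ?R = "stair (2*k+1) (2*k+1)" and ?c = "Down (k-1) 1" and ?t = "large_down (k-2) 0"
  let ?X = "insert (Up k 0) (stair (2*k-1) (2*k-2))"
  have "{t\<in>tiles_containing ?c. t \<subseteq> ?R} = {{?c}, ?t}"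
    unfolding tiles_containing_def cell.case Collect_mem_insert_conj
    using assms by (simp add: large_up_def large_down_def insert_commute)
  then have "num_tilings ?R = num_tilings (?R - {?c}) + num_tilings (?R - ?t)"
    by (rule num_tilings_two_choices[OF finite_stair]) simp
  moreover have "?R - {?c} = stair (2*k+1) (2*k)"
    by (rule cell_set_eqI; use assms in \<open>auto; presburger\<close>)
  moreover have "?R - ?t = ?X"
    by (rule cell_set_eqI; use assms in \<open>auto simp: large_down_def; presburger\<close>)
  moreover have "{t\<in>tiles_containing (Up k 0). t \<subseteq> ?X} = {{Up k 0}}"
    \<comment> \<open>the last cell of the bottom row is now isolated\<close>
    unfolding tiles_containing_def cell.case Collect_mem_insert_conj
    using assms by (simp add: large_up_def large_down_def)
  then have "num_tilings ?X = num_tilings (?X - {Up k 0})"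
    by (simp add: num_tilings_forced)
  moreover have "?X - {Up k 0} = stair (2*k-1) (2*k-2)"
    by (rule cell_set_eqI; use assms in \<open>auto; presburger\<close>)
  ultimately show ?thesis by (simp add: stair_tilings_def)
qed

lemma stair_tilings_3_3: "stair_tilings 3 3 = stair_tilings 3 2"
proof (rule stair_tilings_forced)
  show "{t\<in>tiles_containing (Down 0 1). t \<subseteq> stair 3 3} = {{Down 0 1}}"
    unfolding tiles_containing_def cell.case Collect_mem_insert_conj
    by (simp add: large_up_def large_down_def)
qed ((rule cell_set_eqI; auto simp: large_up_def large_down_def; presburger) | simp)+

lemma stair_tilings_0_0: "stair_tilings 0 0 = 1"
proof -
  have "stair 0 0 = {}" by (rule cell_set_eqI) auto
  then show ?thesis by (simp add: stair_tilings_def num_tilings_empty)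
qed

lemma stair_tilings_1_1: "stair_tilings 1 1 = 1"
proof -
  have "stair_tilings 1 1 = stair_tilings 0 0"
  proof (rule stair_tilings_forced)
    show "{t\<in>tiles_containing (Up 0 0). t \<subseteq> stair 1 1} = {{Up 0 0}}"
      unfolding tiles_containing_def cell.case Collect_mem_insert_conj
      by (simp add: large_up_def large_down_def)
  qed ((rule cell_set_eqI; auto simp: large_up_def large_down_def; presburger) | simp)+
  then show ?thesis by (simp add: stair_tilings_0_0)
qed

lemma stair_tilings_3_2: "stair_tilings 3 2 = stair_tilings 2 2 + 1"
proof -
  have "stair_tilings 3 2 = stair_tilings 2 2 + stair_tilings 0 0"
  proof (rule stair_tilings_two_choices)
    show "{t\<in>tiles_containing (Up 1 0). t \<subseteq> stair 3 2} = {{Up 1 0}, large_up 0 0}"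
      unfolding tiles_containing_def cell.case Collect_mem_insert_conj
      by (simp add: large_up_def large_down_def insert_commute)
  qed ((rule cell_set_eqI; auto simp: large_up_def large_down_def; presburger) | simp)+
  then show ?thesis by (simp add: stair_tilings_0_0)
qed

lemma stair_tilings_small:
  shows "stair_tilings 2 3 = 1" and "stair_tilings 3 2 = 2"
    and "stair_tilings 4 5 = 4" and "stair_tilings 5 4 = 3"
proof -
  have 22: "stair_tilings 2 2 = 1" using stair_tilings_diag[of 1] stair_tilings_1_1 by simp
  show 23: "stair_tilings 2 3 = 1" using stair_tilings_2_3 22 by simp
  show 32: "stair_tilings 3 2 = 2" using stair_tilings_3_2 22 by simp
  have 44: "stair_tilings 4 4 = 2" using stair_tilings_diag[of 2] stair_tilings_3_3 32 by simp
  show "stair_tilings 4 5 = 4" using stair_tilings_even_odd[of 2] 44 32 by simp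
  show "stair_tilings 5 4 = 3" using stair_tilings_odd_even[of 2] 44 23 by simp
qed

lemma stair_tilings_A_step:
  assumes "k \<ge> 3"
  shows "stair_tilings (2*k) (2*k+1)
    = 2 * stair_tilings (2*k-1) (2*k-2) + stair_tilings (2*k-3) (2*k-4)"
proof -
  have "stair_tilings (2*k-1) (2*k-1) = stair_tilings (2*k-1) (2*k-2) + stair_tilings (2*k-3) (2*k-4)"
    using stair_tilings_odd_odd[of "k-1"] assms by (simp add: algebra_simps)
  then show ?thesis
    using stair_tilings_even_odd[of k] stair_tilings_diag[of k] assms by simp
qed

lemma stair_tilings_B_step:
  assumes "k \<ge> 3"
  shows "stair_tilings (2*k+1) (2*k)
    = stair_tilings (2*k-1) (2*k-2) + stair_tilings (2*k-3) (2*k-4) + stair_tilings (2*k-2) (2*k-1)"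
proof -
  have "stair_tilings (2*k-1) (2*k-1) = stair_tilings (2*k-1) (2*k-2) + stair_tilings (2*k-3) (2*k-4)"
    using stair_tilings_odd_odd[of "k-1"] assms by (simp add: algebra_simps)
  then show ?thesis
    using stair_tilings_odd_even[of k] stair_tilings_diag[of k] assms by simp
qed

lemma regionA_eq_stair: "regionA m = stair (2 * int m) (2 * int m + 1)"
  by (rule cell_set_eqI) (auto simp: regionA_def)

lemma regionB_eq_stair: "regionB m = stair (2 * int m + 1) (2 * int m)"
  by (rule cell_set_eqI) (auto simp: regionB_def)

lemma A_eq_stair_tilings: "m \<ge> 1 \<Longrightarrow> A m = int (stair_tilings (2 * int m) (2 * int m + 1))"
  by (simp add: A_def stair_tilings_def regionA_eq_stair)

lemma B_eq_stair_tilings: "m \<ge> 1 \<Longrightarrow> B m = int (stair_tilings (2 * int m + 1) (2 * int m))"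
  by (simp add: B_def stair_tilings_def regionB_eq_stair)

lemma A_B_initial_values:
  "A 0 = 1" "A 1 = 1" "A 2 = 4" "B 0 = 0" "B 1 = 2" "B 2 = 3"
  using stair_tilings_small
  by (simp_all add: A_eq_stair_tilings B_eq_stair_tilings) (simp_all add: A_def B_def)

lemma A_Suc_Suc: "A (j+2) = 2 * B (j+1) + B j"
proof (cases j)
  case 0
  then show ?thesis
    using A_B_initial_values by (simp add: numeral_2_eq_2)
next
  case (Suc i)
  then show ?thesis
    using stair_tilings_A_step[of "int j + 2"]
    by (simp add: A_eq_stair_tilings B_eq_stair_tilings algebra_simps)
qed

lemma B_Suc_Suc: "B (j+2) = B (j+1) + B j + A (j+1)"
proof (cases j)
  case 0
  then show ?thesis
    using A_B_initial_values by (simp add: numeral_2_eq_2)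
next
  case (Suc i)
  then show ?thesis
    using stair_tilings_B_step[of "int j + 2"]
    by (simp add: A_eq_stair_tilings B_eq_stair_tilings algebra_simps)
qed

lemma alternating_defect_recurrence:
  fixes x :: "nat \<Rightarrow> int"
  assumes defect: "\<And>j. x (j+2) - 2 * x (j+1) - x j = c * (-1)^j" and "j \<ge> 4"
  shows "x j = 6 * x (j-2) - x (j-4) - 2 * c * (-1)^j"
proof -
  obtain i where "j = i + 4" using \<open>j \<ge> 4\<close> by (metis add.commute le_Suc_ex)
  then show ?thesis
    using defect[of i] defect[of "i+1"] defect[of "i+2"] by (simp add: eval_nat_numeral algebra_simps)
qed

lemma coupled_recurrence_defects:
  fixes a b :: "nat \<Rightarrow> int"
  assumes a_rec: "\<And>j. a (j+2) = 2 * b (j+1) + b j"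
    and b_rec: "\<And>j. b (j+2) = b (j+1) + b j + a (j+1)"
    and init: "a 0 = 1" "a 1 = 1" "b 0 = 0" "b 1 = 2"
  shows "b (j+2) - 2 * b (j+1) - b j = - ((-1)^j)"
    and "a (j+2) - 2 * a (j+1) - a j = (-1)^j"
proof -
  have b_defect: "b (j+2) - 2 * b (j+1) - b j = - ((-1)^j)" for j
  proof (induction j)
    case 0
    show ?case using b_rec[of 0] init by simp
  next
    case (Suc j)
    then show ?case
      using b_rec[of "j+1"] a_rec[of j] by (simp add: eval_nat_numeral algebra_simps)
  qed
  then show "b (j+2) - 2 * b (j+1) - b j = - ((-1)^j)" .
  consider "j = 0" | "j = 1" | m where "j = m + 2"
    by (metis add_2_eq_Suc' not0_implies_Suc One_nat_def)
  then show "a (j+2) - 2 * a (j+1) - a j = (-1)^j"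
  proof cases
    case 3
    then show ?thesis
      using a_rec[of "m+2"] a_rec[of "m+1"] a_rec[of m] b_defect[of m] b_defect[of "m+1"]
      by (simp add: eval_nat_numeral algebra_simps)
  qed (use a_rec[of 0] a_rec[of 1] b_rec[of 0] init in \<open>simp_all add: eval_nat_numeral\<close>)
qed

theorem mainTheorem4:
  fixes n :: nat
  assumes "n \<ge> 2"
  shows "A (2*n) = 6 * A (2*n-2) - A (2*n-4) - 2
       \<and> A (2*n+1) = 6 * A (2*n-1) - A (2*n-3) + 2
       \<and> B (2*n) = 6 * B (2*n-2) - B (2*n-4) + 2
       \<and> B (2*n+1) = 6 * B (2*n-1) - B (2*n-3) - 2"
proof -
  note defects = coupled_recurrence_defects[OF A_Suc_Suc B_Suc_Suc A_B_initial_values(1,2,4,5)]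
  have A_rec: "A j = 6 * A (j-2) - A (j-4) - 2 * (-1)^j" if "j \<ge> 4" for j
    using alternating_defect_recurrence[of A 1 j] defects(2) that by simp
  have B_rec: "B j = 6 * B (j-2) - B (j-4) + 2 * (-1)^j" if "j \<ge> 4" for j
    using alternating_defect_recurrence[of B "-1" j] defects(1) that by simp
  show ?thesis
    using A_rec[of "2*n"] A_rec[of "2*n+1"] B_rec[of "2*n"] B_rec[of "2*n+1"] assms by simp
qed

end
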